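(* For Algorithm 1 run for any number $T$ of iterations, for every outcome of its random choices and every $i\in[n]$, $S_i\ge -\frac{w\log(2n)}{\alpha}$.
   Context: Standing setup: $A\in\mathbb{R}^{m\times n}_{\ge 0}$ has no zero column and is normalized so that $\min_{i\in[n]}\|A_{:i}\|_\infty=1$, where $A_{:i}$ denotes the $i$-th column. $\epsilon\in(0,1/2]$. $\log$ is natural unless written $\log_2$. $\mu=\frac{\epsilon}{4\log(nm/\epsilon)}$, $p_j(x)=\exp\big(\frac{1}{\mu}((Ax)_j-1)\big)$, $f_\mu(x)=-\mathbf 1^Tx+\mu\sum_jp_j(x)$, $\nabla_i f_\mu(x)=-1+\sum_jA_{ji}p_j(x)$. Algorithm 1 with $T$ iterations: set $\alpha=\mu/20$, $w=\lceil\log_2(1/\epsilon)\rceil$, $x_0[i]=\frac{1-\epsilon/2}{n\|A_{:i}\|_\infty}$. For $k=0,\dots,T-1$: choose $t_k\in\{0,\dots,w-1\}$ uniformly at random, independently of the past; writing $g_i=\nabla_i f_\mu(x_k)$, define $\xi_k[i]=0$ if $|g_i|\le\epsilon$, $\xi_k[i]=g_i$ if $\epsilon<|g_i|\le 1$, $\xi_k[i]=1$ if $g_i>1$; $\xi^{(t)}_k[i]=\xi_k[i]$ if $\epsilon2^t<|\xi_k[i]|\le\epsilon2^{t+1}$ and $0$ otherwise; $x_{k+1}[i]=x_k[i]\exp(-\alpha\,\xi^{(t_k)}_k[i])$. Bucket indicators: for each $k,i$, let $b_k(i)\in\{0,\dots,w-1\}$ be the unique $t$ with $\epsilon2^t<|\xi_k[i]|\le\epsilon2^{t+1}$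 if $\xi_k[i]\ne0$, and $b_k(i)=0$ if $\xi_k[i]=0$; let $Z^{(i)}_k=1$ if $t_k=b_k(i)$ and $0$ otherwise. Define $S_i=w\sum_{k=0}^{T-1}Z^{(i)}_k\big(\min\{\nabla_i f_\mu(x_k),1\}+\epsilon\big)$. *)

theory Defs
  imports Complex_Main
begin

text \<open>The matrix A (m rows, n columns) is a function nat => nat => real, with
  A j i the entry in row j < m, column i < n. Vectors x in R^n are nat => real
  (only indices i < n are relevant).\<close>

definition colnorm :: "(nat \<Rightarrow> nat \<Rightarrow> real) \<Rightarrow> nat \<Rightarrow> nat \<Rightarrow> real" where
  "colnorm A m i = Max ((\<lambda>j. \<bar>A j i\<bar>) ` {..<m})"

definition mu :: "nat \<Rightarrow> nat \<Rightarrow> real \<Rightarrow> real" where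
  "mu n m eps = eps / (4 * ln (real n * real m / eps))"

definition alpha :: "nat \<Rightarrow> nat \<Rightarrow> real \<Rightarrow> real" where
  "alpha n m eps = mu n m eps / 20"

definition wdt :: "real \<Rightarrow> nat" where
  "wdt eps = nat \<lceil>log 2 (1 / eps)\<rceil>"

definition Ax :: "(nat \<Rightarrow> nat \<Rightarrow> real) \<Rightarrow> nat \<Rightarrow> (nat \<Rightarrow> real) \<Rightarrow> nat \<Rightarrow> real" where
  "Ax A n x j = (\<Sum>i<n. A j i * x i)"

definition pj :: "(nat \<Rightarrow> nat \<Rightarrow> real) \<Rightarrow> nat \<Rightarrow> nat \<Rightarrow> real \<Rightarrow> (nat \<Rightarrow> real) \<Rightarrow> nat \<Rightarrow> real" where
  "pj A m n eps x j = exp ((1 / mu n m eps) * (Ax A n x j - 1))"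

definition grad :: "(nat \<Rightarrow> nat \<Rightarrow> real) \<Rightarrow> nat \<Rightarrow> nat \<Rightarrow> real \<Rightarrow> (nat \<Rightarrow> real) \<Rightarrow> nat \<Rightarrow> real" where
  "grad A m n eps x i = -1 + (\<Sum>j<m. A j i * pj A m n eps x j)"

definition clip :: "real \<Rightarrow> real \<Rightarrow> real" where
  "clip eps g = (if \<bar>g\<bar> \<le> eps then 0 else if g > 1 then 1 else g)"

definition bucketpart :: "real \<Rightarrow> nat \<Rightarrow> real \<Rightarrow> real" where
  "bucketpart eps t v = (if eps * 2 ^ t < \<bar>v\<bar> \<and> \<bar>v\<bar> \<le> eps * 2 ^ (t + 1) then v else 0)"

definition bucket :: "real \<Rightarrow> real \<Rightarrow> nat" where
  "bucket eps v = (if v = 0 then 0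
     else (THE t. eps * 2 ^ t < \<bar>v\<bar> \<and> \<bar>v\<bar> \<le> eps * 2 ^ (t + 1)))"

text \<open>Iterates of Algorithm 1, given the sequence ts of random choices t_k.\<close>
primrec iter :: "(nat \<Rightarrow> nat \<Rightarrow> real) \<Rightarrow> nat \<Rightarrow> nat \<Rightarrow> real \<Rightarrow> (nat \<Rightarrow> nat) \<Rightarrow> nat \<Rightarrow> nat \<Rightarrow> real" where
  "iter A m n eps ts 0 = (\<lambda>i. (1 - eps / 2) / (real n * colnorm A m i))"
| "iter A m n eps ts (Suc k) = (\<lambda>i. iter A m n eps ts k i *
      exp (- alpha n m eps * bucketpart eps (ts k) (clip eps (grad A m n eps (iter A m n eps ts k) i))))"

definition Zind :: "(nat \<Rightarrow> nat \<Rightarrow> real) \<Rightarrow> nat \<Rightarrow> nat \<Rightarrow> real \<Rightarrow> (nat \<Rightarrow> nat) \<Rightarrow> nat \<Rightarrow> nat \<Rightarrow> real" where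
  "Zind A m n eps ts k i =
     (if ts k = bucket eps (clip eps (grad A m n eps (iter A m n eps ts k) i)) then 1 else 0)"

definition Ssum :: "(nat \<Rightarrow> nat \<Rightarrow> real) \<Rightarrow> nat \<Rightarrow> nat \<Rightarrow> real \<Rightarrow> (nat \<Rightarrow> nat) \<Rightarrow> nat \<Rightarrow> nat \<Rightarrow> real" where
  "Ssum A m n eps ts T i = real (wdt eps) * (\<Sum>k<T. Zind A m n eps ts k i *
      (min (grad A m n eps (iter A m n eps ts k) i) 1 + eps))"

end

theory Submission
  imports Defs
begin

text \<open>The coordinate x_k[i] of the multiplicative-weights iteration never exceeds
  e^alpha / c, where c is the norm of column i: the update can increase x[i] only when
  the gradient is negative, which forces the row j attaining c to be unsaturated,
  (Ax)_j < 1, hence c x[i] < 1, and one step multiplies by at most e^alpha.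
  Since x_0[i] = (1 - eps/2)/(n c) and e^alpha \<le> 2 - eps, we get x_T[i] \<le> 2n x_0[i].
  Telescoping the logarithm shows that the total step sum_k xi^(t_k)_k[i] is at least
  -ln(2n)/alpha, and each step is dominated by Z_k (min(g,1) + eps).\<close>

lemma bucket_eqI:
  fixes eps v :: real
  assumes "0 < eps" "eps * 2 ^ t < \<bar>v\<bar>" "\<bar>v\<bar> \<le> eps * 2 ^ (t + 1)"
  shows "bucket eps v = t"
proof -
  have "0 < eps * 2 ^ t"
    using assms(1) by simp
  hence "v \<noteq> 0"
    using assms(2) by auto
  have mono: "eps * 2 ^ (a + 1) \<le> eps * 2 ^ b" if "a + 1 \<le> b" for a b :: nat
    using that assms(1) by (intro mult_left_mono power_increasing) auto
  have "(THE s. eps * 2 ^ s < \<bar>v\<bar> \<and> \<bar>v\<bar> \<le> eps * 2 ^ (s + 1)) = t"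
  proof (rule the_equality)
    fix s
    assume s: "eps * 2 ^ s < \<bar>v\<bar> \<and> \<bar>v\<bar> \<le> eps * 2 ^ (s + 1)"
    show "s = t"
    proof (rule ccontr)
      assume "s \<noteq> t"
      then consider "s + 1 \<le> t" | "t + 1 \<le> s" by linarith
      then show False
      proof cases
        case 1
        with mono s assms(2) show False by fastforce
      next
        case 2
        with mono s assms(3) show False by fastforce
      qed
    qed
  qed (use assms in simp)
  thus ?thesis
    unfolding bucket_def using \<open>v \<noteq> 0\<close> by simp
qed

lemma bucket_bounds:
  fixes eps v :: real
  assumes "0 < eps" "eps < \<bar>v\<bar>"
  shows "eps * 2 ^ bucket eps v < \<bar>v\<bar>" "\<bar>v\<bar> \<le> eps * 2 ^ (bucket eps v + 1)"
proof -
  obtain N :: nat where "\<bar>v\<bar> / eps < 2 ^ N"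
    using real_arch_pow[of 2] by auto
  hence N: "\<bar>v\<bar> \<le> eps * 2 ^ N"
    using assms by (simp add: field_simps)
  define t where "t = (LEAST t. \<bar>v\<bar> \<le> eps * 2 ^ t)"
  have ht: "\<bar>v\<bar> \<le> eps * 2 ^ t"
    unfolding t_def using N by (rule LeastI)
  then obtain s where s: "t = Suc s"
    using assms(2) by (cases t) auto
  have "\<not> \<bar>v\<bar> \<le> eps * 2 ^ s"
    using not_less_Least[of s "\<lambda>t. \<bar>v\<bar> \<le> eps * 2 ^ t"] s unfolding t_def by auto
  hence "bucket eps v = s"
    using ht s assms(1) by (intro bucket_eqI) auto
  thus "eps * 2 ^ bucket eps v < \<bar>v\<bar>" "\<bar>v\<bar> \<le> eps * 2 ^ (bucket eps v + 1)"
    using ht s \<open>\<not> \<bar>v\<bar> \<le> eps * 2 ^ s\<close> by auto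
qed

lemma bucketpart_clip_le_indicator:
  fixes eps g :: real
  assumes "0 < eps" "eps < 1" "-1 \<le> g"
  shows "bucketpart eps t (clip eps g)
           \<le> (if t = bucket eps (clip eps g) then 1 else 0) * (min g 1 + eps)"
proof (cases "t = bucket eps (clip eps g)")
  case True
  show ?thesis
  proof (cases "\<bar>g\<bar> \<le> eps")
    case False
    hence "eps < \<bar>clip eps g\<bar>"
      using assms by (auto simp: clip_def)
    hence "bucketpart eps t (clip eps g) = clip eps g"
      using bucket_bounds[OF assms(1)] True by (simp add: bucketpart_def)
    moreover have "clip eps g \<le> min g 1 + eps"
      using assms False by (auto simp: clip_def)
    ultimately show ?thesis
      using True by simp
  qed (use True in \<open>simp add: clip_def bucketpart_def\<close>)
next
  case False
  hence "bucketpart eps t (clip eps g) = 0"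
    using bucket_eqI[OF assms(1)] unfolding bucketpart_def by auto
  thus ?thesis
    using False by simp
qed

lemma sum_ge_of_mult_update:
  fixes x d :: "nat \<Rightarrow> real"
  assumes "0 < a" "0 < x 0"
    and update: "\<And>k. x (Suc k) = x k * exp (- a * d k)"
    and growth: "x T \<le> C * x 0"
  shows "- ln C / a \<le> (\<Sum>k<T. d k)"
proof -
  have closed_form: "x k = x 0 * exp (- a * (\<Sum>j<k. d j))" for k
    by (induction k) (simp_all add: update mult_exp_exp algebra_simps)
  have "x 0 * exp (- a * (\<Sum>k<T. d k)) \<le> x 0 * C"
    using growth closed_form[of T] by (simp add: mult.commute)
  hence "exp (- a * (\<Sum>k<T. d k)) \<le> C"
    using assms(2) by simp
  hence "- a * (\<Sum>k<T. d k) \<le> ln C"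
    using exp_gt_zero ln_exp ln_le_cancel_iff order_less_le_trans by metis
  thus ?thesis
    using assms(1) by (simp add: field_simps)
qed

lemma grad_ge_minus_one:
  assumes "\<forall>j<m. 0 \<le> A j i"
  shows "-1 \<le> grad A m n eps x i"
  using assms unfolding grad_def pj_def by (auto intro!: sum_nonneg)

locale normalized_instance =
  fixes A :: "nat \<Rightarrow> nat \<Rightarrow> real" and m n :: nat and eps :: real
  assumes m_pos: "0 < m" and n_pos: "0 < n"
    and nonneg: "\<forall>j<m. \<forall>i<n. 0 \<le> A j i"
    and min_colnorm: "Min ((\<lambda>i. colnorm A m i) ` {..<n}) = 1"
    and eps_pos: "0 < eps" and eps_le_half: "eps \<le> 1 / 2"
begin

lemma colnorm_ge_1: "i < n \<Longrightarrow> 1 \<le> colnorm A m i"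
  using Min_le[of "(\<lambda>i. colnorm A m i) ` {..<n}"] min_colnorm by auto

lemma colnorm_attained:
  assumes "i < n"
  obtains j where "j < m" "A j i = colnorm A m i"
proof -
  have "colnorm A m i \<in> (\<lambda>j. \<bar>A j i\<bar>) ` {..<m}"
    unfolding colnorm_def using m_pos by (intro Max_in) auto
  thus ?thesis
    using that nonneg assms by auto
qed

lemma colnorm_pos: "i < n \<Longrightarrow> 0 < colnorm A m i"
  using colnorm_ge_1 by fastforce

lemma log_ratio_ge_half: "1 / 2 \<le> ln (real n * real m / eps)"
proof -
  have "exp (1 / 2 :: real) \<le> 2"
    using exp_bound_half[of "1 / 2 :: real"] by simp
  hence "1 / 2 \<le> ln (2 :: real)"
    by (subst ln_ge_iff) auto
  also have "2 \<le> real n * real m / eps"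
  proof -
    have "1 \<le> real n" "1 \<le> real m"
      using n_pos m_pos by simp_all
    hence "1 \<le> real n * real m"
      using mult_mono[of 1 "real n" 1 "real m"] by simp
    thus ?thesis
      using eps_pos eps_le_half by (simp add: le_divide_eq)
  qed
  hence "ln 2 \<le> ln (real n * real m / eps)"
    by simp
  finally show ?thesis .
qed

lemma mu_pos: "0 < mu n m eps"
  unfolding mu_def using log_ratio_ge_half eps_pos by simp

lemma alpha_pos: "0 < alpha n m eps"
  unfolding alpha_def using mu_pos by simp

lemma exp_alpha_le: "exp (alpha n m eps) \<le> 2 - eps"
proof -
  have "alpha n m eps = eps / (80 * ln (real n * real m / eps))"
    unfolding alpha_def mu_def by simp
  also have "\<dots> \<le> (1 / 2) / (80 * (1 / 2))"
    using log_ratio_ge_half eps_pos eps_le_half by (intro frac_le) auto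
  finally have "alpha n m eps \<le> 1 / 80" by simp
  hence "exp (alpha n m eps) \<le> 1 + 2 * alpha n m eps"
    using exp_bound_lemma[of "alpha n m eps"] alpha_pos by simp
  thus ?thesis
    using \<open>alpha n m eps \<le> 1 / 80\<close> eps_le_half by linarith
qed

lemma iter_pos: "i < n \<Longrightarrow> 0 < iter A m n eps ts k i"
  by (induction k) (use colnorm_pos n_pos eps_le_half in \<open>auto intro!: divide_pos_pos\<close>)

lemma colnorm_mult_lt_one_of_grad_neg:
  assumes "i < n" "\<forall>i'<n. 0 \<le> x i'" "grad A m n eps x i < 0"
  shows "colnorm A m i * x i < 1"
proof -
  obtain j where j: "j < m" "A j i = colnorm A m i"
    using colnorm_attained assms(1) .
  let ?c = "colnorm A m i"
  have "?c * pj A m n eps x j \<le> (\<Sum>j<m. A j i * pj A m n eps x j)"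
    using j nonneg assms(1) by (subst j(2)[symmetric], intro member_le_sum) (auto simp: pj_def)
  also have "\<dots> < 1"
    using assms(3) unfolding grad_def by simp
  finally have "?c * pj A m n eps x j < 1" .
  moreover have "pj A m n eps x j \<le> ?c * pj A m n eps x j"
    using colnorm_ge_1[OF assms(1)] by (simp add: pj_def)
  ultimately have "pj A m n eps x j < 1"
    by linarith
  hence "(Ax A n x j - 1) / mu n m eps < 0"
    by (simp add: pj_def)
  hence "Ax A n x j < 1"
    using mu_pos by (simp add: divide_less_0_iff)
  moreover have "?c * x i \<le> Ax A n x j"
    unfolding Ax_def using j nonneg assms(1,2)
    by (subst j(2)[symmetric], intro member_le_sum) auto
  ultimately show ?thesis by simp
qed

lemma iter_le_exp_alpha_div_colnorm:
  assumes "i < n"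
  shows "iter A m n eps ts k i \<le> exp (alpha n m eps) / colnorm A m i"
proof (induction k)
  case 0
  have "1 \<le> real n" "1 \<le> exp (alpha n m eps)"
    using n_pos alpha_pos by simp_all
  hence "1 - eps / 2 \<le> real n * exp (alpha n m eps)"
    using mult_mono[of 1 "real n" 1 "exp (alpha n m eps)"] eps_pos by simp
  hence "(1 - eps / 2) / (real n * colnorm A m i)
           \<le> real n * exp (alpha n m eps) / (real n * colnorm A m i)"
    using colnorm_pos[OF assms] by (intro divide_right_mono) simp_all
  thus ?case
    using n_pos by simp
next
  case (Suc k)
  let ?x = "iter A m n eps ts k" and ?a = "alpha n m eps"
  let ?g = "grad A m n eps ?x i"
  let ?d = "bucketpart eps (ts k) (clip eps ?g)"
  have step: "iter A m n eps ts (Suc k) i = ?x i * exp (- ?a * ?d)"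
    by simp
  show ?case
  proof (cases "0 \<le> ?d")
    case True
    hence "exp (- ?a * ?d) \<le> 1"
      using alpha_pos by simp
    thus ?thesis
      using Suc iter_pos[OF assms] step by (metis mult_left_le less_imp_le order_trans)
  next
    case False
    hence "?d = clip eps ?g" "clip eps ?g < 0"
      by (auto simp: bucketpart_def split: if_splits)
    hence d: "?d = ?g" "?g < - eps"
      by (auto simp: clip_def split: if_splits)
    have "colnorm A m i * ?x i < 1"
      using colnorm_mult_lt_one_of_grad_neg[OF assms] iter_pos d(2) eps_pos
      by (simp add: less_imp_le)
    hence "?x i \<le> 1 / colnorm A m i"
      using colnorm_pos[OF assms] by (simp add: field_simps)
    moreover have "-1 \<le> ?g"
      using grad_ge_minus_one nonneg assms by blast
    hence "?a * (- ?d) \<le> ?a * 1"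
      using d alpha_pos by (intro mult_left_mono) auto
    hence "exp (- ?a * ?d) \<le> exp ?a"
      by simp
    ultimately have "?x i * exp (- ?a * ?d) \<le> 1 / colnorm A m i * exp ?a"
      using iter_pos[OF assms] colnorm_pos[OF assms] by (intro mult_mono) auto
    thus ?thesis
      using step by simp
  qed
qed

lemma iter_le_2n_times_initial:
  assumes "i < n"
  shows "iter A m n eps ts T i \<le> 2 * real n * iter A m n eps ts 0 i"
proof -
  have "iter A m n eps ts T i \<le> exp (alpha n m eps) / colnorm A m i"
    using assms by (rule iter_le_exp_alpha_div_colnorm)
  also have "\<dots> \<le> (2 - eps) / colnorm A m i"
    using exp_alpha_le colnorm_pos[OF assms] by (simp add: divide_right_mono)
  also have "\<dots> = 2 * real n * iter A m n eps ts 0 i"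
    using n_pos colnorm_pos[OF assms] by (simp add: field_simps)
  finally show ?thesis .
qed

lemma sum_bucketpart_ge:
  assumes "i < n"
  shows "- ln (2 * real n) / alpha n m eps
           \<le> (\<Sum>k<T. bucketpart eps (ts k) (clip eps (grad A m n eps (iter A m n eps ts k) i)))"
  by (rule sum_ge_of_mult_update[where x = "\<lambda>k. iter A m n eps ts k i"])
    (use alpha_pos iter_pos[OF assms] iter_le_2n_times_initial[OF assms] in \<open>simp_all del: iter.simps(1)\<close>)

end

theorem lemma4p2:
  fixes A :: "nat \<Rightarrow> nat \<Rightarrow> real" and m n T i :: nat and eps :: real
    and ts :: "nat \<Rightarrow> nat"
  assumes "0 < m" and "0 < n"
    and "\<forall>j<m. \<forall>i'<n. 0 \<le> A j i'"
    and "\<forall>i'<n. \<exists>j<m. A j i' \<noteq> 0"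
    and "Min ((\<lambda>i'. colnorm A m i') ` {..<n}) = 1"
    and "0 < eps" and "eps \<le> 1 / 2"
    and "\<forall>k. ts k < wdt eps"
    and "i < n"
  shows "Ssum A m n eps ts T i \<ge> - (real (wdt eps) * ln (2 * real n)) / alpha n m eps"
proof -
  interpret normalized_instance A m n eps
    using assms by unfold_locales auto
  let ?g = "\<lambda>k. grad A m n eps (iter A m n eps ts k) i"
  have "- ln (2 * real n) / alpha n m eps
          \<le> (\<Sum>k<T. bucketpart eps (ts k) (clip eps (?g k)))"
    using sum_bucketpart_ge[OF assms(9)] .
  also have "\<dots> \<le> (\<Sum>k<T. Zind A m n eps ts k i * (min (?g k) 1 + eps))"
    unfolding Zind_def using assms(3,6,7,9) grad_ge_minus_one
    by (intro sum_mono bucketpart_clip_le_indicator) auto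
  finally have "real (wdt eps) * (- ln (2 * real n) / alpha n m eps)
          \<le> Ssum A m n eps ts T i"
    unfolding Ssum_def by (rule mult_left_mono) simp
  thus ?thesis
    by simp
qed

end
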